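(* Under the standing setup (with $f$ possibly unbounded), let $t\ge0$ and let $(\pi_n)_{n\in\mathbb N}\subset P_t$ satisfy $\pi_n\subset\pi_{n+1}$ for all $n$ and $|\pi_n|_\infty\searrow0$ as $n\to\infty$. Then for all $u_0\in\mathbb R^d$, $\mathcal E_{\pi_n}u_0\nearrow\mathscr S(t)u_0$ as $n\to\infty$.
   Context: Standing setup: $d\in\mathbb N$; vectors in $\mathbb R^d$ with $\|u\|_\infty=\max_i|u_i|$; inequalities and suprema of vectors are componentwise; reals are identified with constant vectors. A $Q$-matrix is $q\in\mathbb R^{d\times d}$ with $q_{ii}\le0$, $q_{ij}\ge0$ ($i\ne j$), $\sum_jq_{ij}=0$. Let $\mathcal P$ be a set of $Q$-matrices and $f=(f_q)_{q\in\mathcal P}\subset\mathbb R^d$ with $\sup_{q\in\mathcal P}f_q=f_{q_0}=0$ for some $q_0\in\mathcal P$, such that $\mathcal Qu:=\sup_{q\in\mathcal P}(qu+f_q)$ is finite for every $u\in\mathbb R^d$. For $q\in\mathcal P$, $t\ge0$: $S_q(t)u_0:=e^{tq}u_0+\int_0^te^{sq}f_q\,ds$. For $h\ge0$: $\mathcal E_hu_0:=\sup_{q\in\mathcal P}S_q(h)u_0$. $P$ is the set of finite subsets $\pi\subset[0,\infty)$ with $0\in\pi$; $P_t:=\{\pi\in P:\max\pi=t\}$. For $\pi=\{t_0,\dots,t_m\}$ with $0=t_0<\dots<t_m$, $m\ge1$, $\mathcal E_\pi:=\mathcal E_{t_1-t_0}\circ\cdots\circ\mathcal E_{t_m-t_{m-1}}$,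 and $\mathcal E_{\{0\}}:=\mathcal E_0$; the mesh size is $|\pi|_\infty:=\max_j(t_j-t_{j-1})$, $|\{0\}|_\infty:=0$. The Nisio semigroup of $(\mathcal P,f)$ is $\mathscr S(t)u_0:=\sup_{\pi\in P_t}\mathcal E_\pi u_0$. *)

theory Defs
  imports "HOL-Analysis.Analysis"
begin

text \<open>Vectors in R^d are real^'d (componentwise order and componentwise Sup are
the library instances); d x d matrices are real^'d^'d with matrix product **.\<close>

definition is_Qmatrix :: "real^'d^'d \<Rightarrow> bool" where
  "is_Qmatrix q \<longleftrightarrow> (\<forall>i. q$i$i \<le> 0) \<and> (\<forall>i j. i \<noteq> j \<longrightarrow> q$i$j \<ge> 0)
      \<and> (\<forall>i. (\<Sum>j\<in>UNIV. q$i$j) = 0)"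

fun matpow :: "real^'d^'d \<Rightarrow> nat \<Rightarrow> real^'d^'d" where
  "matpow q 0 = mat 1"
| "matpow q (Suc k) = q ** matpow q k"

definition mexp :: "real \<Rightarrow> real^'d^'d \<Rightarrow> real^'d^'d" where
  "mexp t q = (\<Sum>k. (t ^ k / fact k) *\<^sub>R matpow q k)"

definition Sq :: "(real^'d^'d \<Rightarrow> real^'d) \<Rightarrow> real^'d^'d \<Rightarrow> real \<Rightarrow> real^'d \<Rightarrow> real^'d" where
  "Sq f q t u0 = mexp t q *v u0 + integral {0..t} (\<lambda>s. mexp s q *v f q)"

definition Eh :: "(real^'d^'d) set \<Rightarrow> (real^'d^'d \<Rightarrow> real^'d) \<Rightarrow> real \<Rightarrow> real^'d \<Rightarrow> real^'d" where
  "Eh P f h u0 = (SUP q\<in>P. Sq f q h u0)"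

definition partitions :: "real set set" where
  "partitions = {\<pi>. finite \<pi> \<and> \<pi> \<subseteq> {0..} \<and> 0 \<in> \<pi>}"

definition partitions_at :: "real \<Rightarrow> real set set" where
  "partitions_at t = {\<pi> \<in> partitions. Max \<pi> = t}"

fun comp_list :: "(real^'d^'d) set \<Rightarrow> (real^'d^'d \<Rightarrow> real^'d) \<Rightarrow> real list \<Rightarrow> real^'d \<Rightarrow> real^'d" where
  "comp_list P f (a # b # r) u = Eh P f (b - a) (comp_list P f (b # r) u)"
| "comp_list P f _ u = u"

definition Epi :: "(real^'d^'d) set \<Rightarrow> (real^'d^'d \<Rightarrow> real^'d) \<Rightarrow> real set \<Rightarrow> real^'d \<Rightarrow> real^'d" where
  "Epi P f \<pi> u = (if \<pi> = {0} then Eh P f 0 u else comp_list P f (sorted_list_of_set \<pi>) u)"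

definition mesh :: "real set \<Rightarrow> real" where
  "mesh \<pi> = (let xs = sorted_list_of_set \<pi> in
      Max (insert 0 (set (map2 (\<lambda>a b. b - a) xs (tl xs)))))"

definition Nisio :: "(real^'d^'d) set \<Rightarrow> (real^'d^'d \<Rightarrow> real^'d) \<Rightarrow> real \<Rightarrow> real^'d \<Rightarrow> real^'d" where
  "Nisio P f t u0 = (SUP \<pi>\<in>partitions_at t. Epi P f \<pi> u0)"

end

theory Submission
  imports Defs
begin

text \<open>
Since \<open>e^{tq}\<close> is positive and fixes constants, every \<open>S_q(h)\<close> is monotone and commutes with
adding constants; hence \<open>\<E>_h\<close> is monotone, nonexpansive in the sup-norm, and
\<open>\<E>_{h+k} \<le> \<E>_h \<E>_k\<close>, so refining a partition can only increase \<open>\<E>_\<pi>\<close>. Conversely, on a bounded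
set of initial values the generators \<open>qu + f_q\<close> are uniformly bounded above and \<open>q\<^sub>0 u\<close> is
bounded below, which gives \<open>\<E>_h \<E>_k \<le> \<E>_{h+k} + (h+k) K\<close>. Adding one point to \<open>\<pi>\<close> therefore
raises \<open>\<E>_\<pi>\<close> by at most \<open>|\<pi>|\<^sub>\<infinity> K\<close>, and every \<open>\<pi>' \<in> P_t\<close> satisfies
\<open>\<E>_{\<pi>'} \<le> \<E>_{\<pi>' \<union> \<pi>_n} \<le> \<E>_{\<pi>_n} + #\<pi>' |\<pi>_n|\<^sub>\<infinity> K\<close>. Letting \<open>n \<rightarrow> \<infinity>\<close> shows that the increasing
sequence \<open>\<E>_{\<pi>_n} u\<^sub>0\<close> exhausts the supremum defining the Nisio semigroup.
\<close>

text \<open>Bounded endomorphisms of \<open>real^'n\<close> form a Banach algebra, whose library exponential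
  yields the matrix exponential \<open>mexp\<close> together with its semigroup and derivative laws.\<close>

typedef (overloaded) ('n::finite) endo = "UNIV :: ((real^'n) \<Rightarrow>\<^sub>L (real^'n)) set"
  morphisms blinfun_of_endo Endo by auto

setup_lifting type_definition_endo

instantiation endo :: (finite) real_normed_vector
begin
lift_definition norm_endo :: "'a endo \<Rightarrow> real" is norm .
lift_definition minus_endo :: "'a endo \<Rightarrow> 'a endo \<Rightarrow> 'a endo" is "(-)" .
lift_definition plus_endo :: "'a endo \<Rightarrow> 'a endo \<Rightarrow> 'a endo" is "(+)" .
lift_definition uminus_endo :: "'a endo \<Rightarrow> 'a endo" is "uminus" .
lift_definition zero_endo :: "'a endo" is "0" .
lift_definition scaleR_endo :: "real \<Rightarrow> 'a endo \<Rightarrow> 'a endo" is "scaleR" .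
definition dist_endo :: "'a endo \<Rightarrow> 'a endo \<Rightarrow> real" where "dist_endo a b = norm (a - b)"
definition sgn_endo :: "'a endo \<Rightarrow> 'a endo" where "sgn_endo x = scaleR (inverse (norm x)) x"
definition uniformity_endo :: "('a endo \<times> 'a endo) filter" where
  "uniformity_endo = (INF e\<in>{0 <..}. principal {(x, y). dist x y < e})"
definition open_endo :: "'a endo set \<Rightarrow> bool"
  where "open_endo S = (\<forall>x\<in>S. \<forall>\<^sub>F (x', y) in uniformity. x' = x \<longrightarrow> y \<in> S)"
instance
  apply standard
  unfolding dist_endo_def open_endo_def sgn_endo_def uniformity_endo_def
  apply (rule refl | (transfer, force simp: norm_triangle_ineq algebra_simps))+
  done
end

instantiation endo :: (finite) real_normed_algebra_1
begin
lift_definition times_endo :: "'a endo \<Rightarrow> 'a endo \<Rightarrow> 'a endo" is "(o\<^sub>L)" .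
lift_definition one_endo :: "'a endo" is "id_blinfun" .
instance
proof
  fix a b c :: "'a endo" and r :: real
  show "a * b * c = a * (b * c)" by transfer (rule blinfun_eqI, simp)
  show "1 * a = a" by transfer (rule blinfun_eqI, simp)
  show "a * 1 = a" by transfer (rule blinfun_eqI, simp)
  show "(a + b) * c = a * c + b * c"
    by transfer (rule blinfun_eqI, simp add: blinfun.bilinear_simps)
  show "a * (b + c) = a * b + a * c"
    by transfer (rule blinfun_eqI, simp add: blinfun.bilinear_simps)
  show "r *\<^sub>R a * b = r *\<^sub>R (a * b)"
    by transfer (rule blinfun_eqI, simp add: blinfun.bilinear_simps)
  show "a * r *\<^sub>R b = r *\<^sub>R (a * b)"
    by transfer (rule blinfun_eqI, simp add: blinfun.bilinear_simps)
  show "norm (a * b) \<le> norm a * norm b" by transfer (rule norm_blinfun_compose)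
  show "norm (1::'a endo) = 1" by transfer simp
  show "(0::'a endo) \<noteq> 1"
    by transfer (metis norm_blinfun_id norm_zero zero_neq_one)
qed
end

instance endo :: (finite) banach
proof
  fix X :: "nat \<Rightarrow> 'a endo"
  assume "Cauchy X"
  hence "Cauchy (\<lambda>n. blinfun_of_endo (X n))"
    unfolding Cauchy_def dist_endo_def dist_norm by transfer simp
  then obtain L where "(\<lambda>n. blinfun_of_endo (X n)) \<longlonglongrightarrow> L"
    by (metis Cauchy_convergent_iff convergent_def)
  hence "X \<longlonglongrightarrow> Endo L"
    unfolding LIMSEQ_iff by transfer (simp add: Endo_inverse)
  thus "convergent X" by (auto simp: convergent_def)
qed

definition endo_apply :: "'n::finite endo \<Rightarrow> real^'n \<Rightarrow> real^'n" where
  "endo_apply M = blinfun_apply (blinfun_of_endo M)"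

definition endo_of_matrix :: "real^'n^'n \<Rightarrow> 'n::finite endo" where
  "endo_of_matrix q = Endo (Blinfun (\<lambda>v. q *v v))"

definition matrix_of_endo :: "'n::finite endo \<Rightarrow> real^'n^'n" where
  "matrix_of_endo M = matrix (endo_apply M)"

lemma endo_apply_endo_of_matrix [simp]: "endo_apply (endo_of_matrix q) v = q *v v"
  unfolding endo_apply_def endo_of_matrix_def
  by (simp add: Endo_inverse bounded_linear_Blinfun_apply)

lemma endo_apply_mult [simp]: "endo_apply (A * B) v = endo_apply A (endo_apply B v)"
  unfolding endo_apply_def by transfer simp

lemma endo_apply_one [simp]: "endo_apply 1 v = v"
  unfolding endo_apply_def by transfer simp

lemma endo_apply_add_left [simp]: "endo_apply (A + B) v = endo_apply A v + endo_apply B v"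
  unfolding endo_apply_def by transfer (simp add: blinfun.bilinear_simps)

lemma endo_apply_scaleR_left [simp]: "endo_apply (r *\<^sub>R A) v = r *\<^sub>R endo_apply A v"
  unfolding endo_apply_def by transfer (simp add: blinfun.bilinear_simps)

lemma bounded_linear_endo_apply: "bounded_linear (endo_apply A)"
  unfolding endo_apply_def by (rule blinfun.bounded_linear_right)

lemma bounded_linear_endo_apply_left: "bounded_linear (\<lambda>A. endo_apply A v)"
proof (rule bounded_linear_intro[where K = "norm v"])
  show "norm (endo_apply A v) \<le> norm A * norm v" for A
    unfolding endo_apply_def by transfer (rule norm_blinfun)
qed simp_all

lemma endo_eqI: "(\<And>v. endo_apply A v = endo_apply B v) \<Longrightarrow> A = B"
  unfolding endo_apply_def by (metis blinfun_eqI blinfun_of_endo_inject)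

lemma matrix_of_endo_mult_vector [simp]: "matrix_of_endo M *v v = endo_apply M v"
  unfolding matrix_of_endo_def
  using bounded_linear_endo_apply matrix_vector_mul(3) by metis

lemma matrix_of_endo_of_matrix [simp]: "matrix_of_endo (endo_of_matrix q) = q"
  by (simp add: matrix_of_endo_def endo_apply_endo_of_matrix[abs_def])

lemma endo_of_matrix_mult: "endo_of_matrix (p ** q) = endo_of_matrix p * endo_of_matrix q"
  by (rule endo_eqI) (simp add: matrix_vector_mul_assoc)

lemma endo_of_matrix_power: "endo_of_matrix (matpow q k) = endo_of_matrix q ^ k"
  by (induction k) (auto intro: endo_eqI simp: endo_of_matrix_mult)

lemma matrix_of_endo_scaleR [simp]: "matrix_of_endo (r *\<^sub>R M) = r *\<^sub>R matrix_of_endo M"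
  by (simp add: matrix_of_endo_def matrix_def vec_eq_iff)

lemma bounded_linear_matrix_of_endo: "bounded_linear (matrix_of_endo :: 'n::finite endo \<Rightarrow> _)"
proof (rule bounded_linear_intro[where K = "real CARD('n) * real CARD('n)"])
  fix M :: "'n endo"
  have entry: "\<bar>matrix_of_endo M $ i $ j\<bar> \<le> norm M" for i j
    using component_le_onorm[of "endo_apply M" i j] linear_linear bounded_linear_endo_apply
    unfolding matrix_of_endo_def endo_apply_def
    by (metis norm_blinfun.rep_eq norm_endo.rep_eq bounded_linear.linear)
  have "norm (matrix_of_endo M) \<le> (\<Sum>i\<in>UNIV. norm (matrix_of_endo M $ i))"
    unfolding norm_vec_def by (rule L2_set_le_sum) simp
  also have "\<dots> \<le> (\<Sum>i\<in>(UNIV::'n set). \<Sum>j\<in>(UNIV::'n set). norm M)"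
    by (intro sum_mono order_trans[OF norm_le_l1_cart] entry)
  finally show "norm (matrix_of_endo M) \<le> norm M * (real CARD('n) * real CARD('n))"
    by (simp add: mult_ac)
qed (simp_all add: matrix_of_endo_def matrix_def vec_eq_iff)

lemma mexp_eq_exp: "mexp t q = matrix_of_endo (exp (t *\<^sub>R endo_of_matrix q))"
proof -
  have "matrix_of_endo ((t *\<^sub>R endo_of_matrix q) ^ k /\<^sub>R fact k) = (t ^ k / fact k) *\<^sub>R matpow q k"
    for k
    by (simp add: scaleR_power endo_of_matrix_power[symmetric] divide_inverse mult.commute)
  moreover have "matrix_of_endo (exp (t *\<^sub>R endo_of_matrix q)) =
      (\<Sum>k. matrix_of_endo ((t *\<^sub>R endo_of_matrix q) ^ k /\<^sub>R fact k))"
    unfolding exp_def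
    by (rule bounded_linear.suminf[OF bounded_linear_matrix_of_endo summable_exp_generic])
  ultimately show ?thesis
    unfolding mexp_def by simp
qed

lemma mexp_mult_vector: "mexp t q *v v = endo_apply (exp (t *\<^sub>R endo_of_matrix q)) v"
  unfolding mexp_eq_exp by simp

lemma mexp_zero [simp]: "mexp 0 q = mat 1"
  by (simp add: matrix_eq mexp_mult_vector)

lemma mexp_add: "mexp (s + t) q = mexp s q ** mexp t q"
  by (simp add: matrix_eq mexp_mult_vector scaleR_add_left exp_add_commuting
      matrix_vector_mul_assoc[symmetric])

lemma mexp_has_vector_derivative:
  "((\<lambda>s. mexp s q *v w) has_vector_derivative mexp s q *v (q *v w)) (at s within T)"
proof -
  have "((\<lambda>s. endo_apply (exp (s *\<^sub>R endo_of_matrix q)) w) has_vector_derivative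
      endo_apply (exp (s *\<^sub>R endo_of_matrix q) * endo_of_matrix q) w) (at s within T)"
    by (rule bounded_linear.has_vector_derivative[OF bounded_linear_endo_apply_left
          exp_scaleR_has_vector_derivative_right])
  thus ?thesis by (simp add: mexp_mult_vector)
qed

lemma continuous_on_mexp: "continuous_on S (\<lambda>s. mexp s q *v w)"
  unfolding continuous_on_eq_continuous_within
  using has_vector_derivative_continuous[OF mexp_has_vector_derivative] by blast

lemma mexp_integrable: "(\<lambda>s. mexp s q *v w) integrable_on {a..b}"
  by (rule integrable_continuous_real[OF continuous_on_mexp])

lemma endo_exp_nonneg:
  assumes A: "\<And>w. 0 \<le> w \<Longrightarrow> 0 \<le> endo_apply A w" and w: "0 \<le> w" and t: "0 \<le> t"
  shows "0 \<le> endo_apply (exp (t *\<^sub>R A)) w"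
proof -
  let ?term = "\<lambda>k. endo_apply ((t *\<^sub>R A) ^ k /\<^sub>R fact k) w"
  have pow_nonneg: "0 \<le> endo_apply (A ^ k) w" for k
    by (induction k) (simp_all add: w A)
  have summable: "summable ?term"
    by (rule bounded_linear.summable[OF bounded_linear_endo_apply_left summable_exp_generic])
  have "endo_apply (exp (t *\<^sub>R A)) w = (\<Sum>k. ?term k)"
    unfolding exp_def
    by (rule bounded_linear.suminf[OF bounded_linear_endo_apply_left summable_exp_generic])
  moreover have "0 \<le> (\<Sum>k. ?term k) $ i" for i
  proof -
    have "?term k $ i = (t ^ k / fact k) * (endo_apply (A ^ k) w $ i)" for k
      by (simp add: scaleR_power divide_inverse mult.commute)
    hence "0 \<le> ?term k $ i" for k
      using pow_nonneg[of k] t by (simp add: less_eq_vec_def)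
    thus ?thesis
      using bounded_linear.suminf[OF bounded_linear_vec_nth summable, of i]
        suminf_nonneg[OF bounded_linear.summable[OF bounded_linear_vec_nth summable]]
      by simp
  qed
  ultimately show ?thesis by (simp add: less_eq_vec_def)
qed

lemma Qmatrix_shift_nonneg:
  assumes Q: "is_Qmatrix q" and w: "0 \<le> w"
  shows "0 \<le> q *v w + (\<Sum>i\<in>UNIV. \<bar>q$i$i\<bar>) *\<^sub>R w"
  unfolding less_eq_vec_def
proof
  fix i
  let ?c = "\<Sum>i\<in>UNIV. \<bar>q$i$i\<bar>"
  have "\<bar>q$i$i\<bar> \<le> ?c" by (rule member_le_sum) auto
  hence diag: "0 \<le> (q$i$i + ?c) * w$i"
    using w by (auto simp: less_eq_vec_def intro!: mult_nonneg_nonneg)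
  have off_diag: "0 \<le> (\<Sum>j\<in>UNIV-{i}. q$i$j * w$j)"
    using Q w by (intro sum_nonneg) (auto simp: is_Qmatrix_def less_eq_vec_def)
  have "(q *v w) $ i = q$i$i * w$i + (\<Sum>j\<in>UNIV-{i}. q$i$j * w$j)"
    by (simp add: matrix_vector_mult_def sum.remove)
  thus "0 $ i \<le> (q *v w + ?c *\<^sub>R w) $ i"
    using diag off_diag by (simp add: algebra_simps)
qed

text \<open>A Q-matrix plus a large multiple of the identity is entrywise nonnegative, and the
  two summands commute, so \<open>e^{tq}\<close> is a positive multiple of a positive operator.\<close>

lemma mexp_nonneg:
  assumes Q: "is_Qmatrix q" and w: "0 \<le> w" and t: "0 \<le> t"
  shows "0 \<le> mexp t q *v w"
proof -
  define c where "c = (\<Sum>i\<in>UNIV. \<bar>q$i$i\<bar>)"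
  define A where "A = endo_of_matrix q + c *\<^sub>R (1::'a endo)"
  have "exp (t *\<^sub>R endo_of_matrix q) = exp (t *\<^sub>R A + of_real (- (t * c)))"
    by (simp add: A_def of_real_def algebra_simps)
  also have "\<dots> = exp (t *\<^sub>R A) * exp (of_real (- (t * c)))"
    by (rule exp_add_commuting) (simp add: of_real_def)
  also have "exp (of_real (- (t * c))) = exp (- (t * c)) *\<^sub>R (1::'a endo)"
    by (simp only: exp_of_real) (simp add: of_real_def)
  finally have "mexp t q *v w = exp (- (t * c)) *\<^sub>R endo_apply (exp (t *\<^sub>R A)) w"
    by (simp add: mexp_mult_vector)
  moreover have "0 \<le> endo_apply (exp (t *\<^sub>R A)) w"
    using endo_exp_nonneg[OF _ w t] Qmatrix_shift_nonneg[OF Q] by (simp add: A_def c_def)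
  ultimately show ?thesis by (simp add: scaleR_nonneg_nonneg)
qed

lemma mexp_mono:
  "is_Qmatrix q \<Longrightarrow> v \<le> w \<Longrightarrow> 0 \<le> t \<Longrightarrow> mexp t q *v v \<le> mexp t q *v w"
  using mexp_nonneg[of q "w - v" t] by (simp add: matrix_vector_mult_diff_distrib)

lemma mexp_one:
  assumes Q: "is_Qmatrix q"
  shows "mexp t q *v 1 = 1"
proof -
  have "q *v 1 = 0"
    using Q by (simp add: is_Qmatrix_def matrix_vector_mult_def vec_eq_iff)
  hence "((\<lambda>s. mexp s q *v 1) has_derivative (\<lambda>h. 0)) (at s within UNIV)" for s
    using mexp_has_vector_derivative[of q 1 s UNIV] by (simp add: has_vector_derivative_def)
  then obtain c where "\<And>s. mexp s q *v 1 = c"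
    using has_derivative_zero_constant[of UNIV "\<lambda>s. mexp s q *v 1"] by auto
  from this[of 0] this[of t] show ?thesis by simp
qed

lemma integral_le_vec:
  fixes g h :: "real \<Rightarrow> real^'n::finite"
  assumes g: "g integrable_on S" and h: "h integrable_on S" and le: "\<And>s. s \<in> S \<Longrightarrow> g s \<le> h s"
  shows "integral S g \<le> integral S h"
  unfolding less_eq_vec_def
proof
  fix i
  have "integral S (\<lambda>s. g s $ i) \<le> integral S (\<lambda>s. h s $ i)"
    using integrable_linear[OF g bounded_linear_vec_nth] integrable_linear[OF h bounded_linear_vec_nth]
      le
    by (intro integral_le) (auto simp: o_def less_eq_vec_def)
  thus "integral S g $ i \<le> integral S h $ i"
    using g h by simp
qed

lemma integral_mexp_add:
  assumes h1: "0 \<le> h1" and h2: "0 \<le> h2"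
  shows "integral {0..h1 + h2} (\<lambda>s. mexp s q *v y) =
    integral {0..h1} (\<lambda>s. mexp s q *v y) + mexp h1 q *v integral {0..h2} (\<lambda>s. mexp s q *v y)"
proof -
  let ?g = "\<lambda>s. mexp s q *v y"
  have "integral {0..h1 + h2} ?g = integral {0..h1} ?g + integral {h1..h1 + h2} ?g"
    using Henstock_Kurzweil_Integration.integral_combine[of 0 h1 "h1 + h2" ?g] h1 h2
    by (simp add: mexp_integrable)
  moreover have "integral {h1..h1 + h2} ?g = integral {0..h2} (?g \<circ> (+) h1)"
    using integral_shift_Icc_real[of 0 h2 ?g h1] by (simp add: add.commute)
  moreover have "?g \<circ> (+) h1 = (*v) (mexp h1 q) \<circ> ?g"
    by (simp add: o_def mexp_add matrix_vector_mul_assoc)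
  ultimately show ?thesis
    using integral_linear[OF mexp_integrable matrix_vector_mul_bounded_linear] by simp
qed

lemma Sq_zero [simp]: "Sq f q 0 w = w"
  by (simp add: Sq_def)

lemma Sq_add:
  "0 \<le> h1 \<Longrightarrow> 0 \<le> h2 \<Longrightarrow> Sq f q (h1 + h2) u = Sq f q h1 (Sq f q h2 u)"
  unfolding Sq_def integral_mexp_add mexp_add
  by (simp add: matrix_vector_mul_assoc matrix_vector_right_distrib algebra_simps)

lemma Sq_mono: "is_Qmatrix q \<Longrightarrow> 0 \<le> h \<Longrightarrow> v \<le> w \<Longrightarrow> Sq f q h v \<le> Sq f q h w"
  unfolding Sq_def using mexp_mono by simp

lemma Sq_add_const:
  "is_Qmatrix q \<Longrightarrow> Sq f q h (w + c *\<^sub>R 1) = Sq f q h w + c *\<^sub>R 1"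
  unfolding Sq_def by (simp add: matrix_vector_right_distrib mexp_one algebra_simps)

lemma Sq_minus_eq_integral:
  assumes h: "0 \<le> h"
  shows "Sq f q h w - w = integral {0..h} (\<lambda>s. mexp s q *v (q *v w + f q))"
proof -
  have "((\<lambda>s. mexp s q *v (q *v w)) has_integral (mexp h q *v w - mexp 0 q *v w)) {0..h}"
    by (rule fundamental_theorem_of_calculus[OF h mexp_has_vector_derivative])
  thus ?thesis
    unfolding Sq_def
    by (simp add: matrix_vector_right_distrib integral_add mexp_integrable integral_unique)
qed

lemma Sq_le_add_const:
  assumes Q: "is_Qmatrix q" and h: "0 \<le> h" and c: "q *v w + f q \<le> c *\<^sub>R 1"
  shows "Sq f q h w \<le> w + (h * c) *\<^sub>R 1"
proof -
  have "integral {0..h} (\<lambda>s. mexp s q *v (q *v w + f q)) \<le> integral {0..h} (\<lambda>s. c *\<^sub>R 1)"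
    using mexp_mono[OF Q c]
    by (intro integral_le_vec mexp_integrable) (auto simp: matrix_vector_mult_scaleR mexp_one[OF Q])
  thus ?thesis
    using Sq_minus_eq_integral[OF h, of f q w] h by (simp add: algebra_simps)
qed

lemma Sq_ge_add_const:
  assumes Q: "is_Qmatrix q" and h: "0 \<le> h" and c: "c *\<^sub>R 1 \<le> q *v w + f q"
  shows "w + (h * c) *\<^sub>R 1 \<le> Sq f q h w"
proof -
  have "integral {0..h} (\<lambda>s. c *\<^sub>R 1) \<le> integral {0..h} (\<lambda>s. mexp s q *v (q *v w + f q))"
    using mexp_mono[OF Q c]
    by (intro integral_le_vec mexp_integrable) (auto simp: matrix_vector_mult_scaleR mexp_one[OF Q])
  thus ?thesis
    using Sq_minus_eq_integral[OF h, of f q w] h by (simp add: algebra_simps)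
qed

lemma Sq_le_const:
  assumes Q: "is_Qmatrix q" and h: "0 \<le> h" and f: "f q \<le> 0" and w: "w \<le> b *\<^sub>R 1"
  shows "Sq f q h w \<le> b *\<^sub>R 1"
proof -
  have "mexp h q *v w \<le> b *\<^sub>R 1"
    using mexp_mono[OF Q w h] by (simp add: matrix_vector_mult_scaleR mexp_one[OF Q])
  moreover have "integral {0..h} (\<lambda>s. mexp s q *v f q) \<le> integral {0..h} (\<lambda>s. 0)"
    using mexp_mono[OF Q f] by (intro integral_le_vec mexp_integrable) auto
  ultimately show ?thesis
    unfolding Sq_def by (metis add_mono add_0_right integral_0)
qed

lemma vec_in_box_norm: "w \<in> {(- norm w) *\<^sub>R 1..norm w *\<^sub>R (1::real^'n::finite)}"
  using abs_le_D1[OF component_le_norm_cart] abs_le_D2[OF component_le_norm_cart]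
  by (auto simp: less_eq_vec_def minus_le_iff)

lemma matrix_vector_mult_box_lower_bound:
  fixes q :: "real^'n::finite^'m::finite"
  shows "\<exists>C. \<forall>w\<in>{a *\<^sub>R 1..b *\<^sub>R 1}. (- C) *\<^sub>R 1 \<le> q *v w"
proof (intro exI ballI)
  fix w :: "real^'n" assume "w \<in> {a *\<^sub>R 1..b *\<^sub>R 1}"
  hence "a \<le> w $ j" "w $ j \<le> b" for j by (auto simp: less_eq_vec_def)
  hence w: "\<bar>w $ j\<bar> \<le> \<bar>a\<bar> + \<bar>b\<bar>" for j by (smt (verit))
  show "(- ((\<Sum>i\<in>UNIV. \<Sum>j\<in>UNIV. \<bar>q$i$j\<bar>) * (\<bar>a\<bar> + \<bar>b\<bar>))) *\<^sub>R 1 \<le> q *v w"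
    unfolding less_eq_vec_def
  proof
    fix i
    have "\<bar>(q *v w) $ i\<bar> \<le> (\<Sum>j\<in>UNIV. \<bar>q$i$j\<bar> * (\<bar>a\<bar> + \<bar>b\<bar>))"
      unfolding matrix_vector_mult_def
      by (simp, rule order_trans[OF sum_abs sum_mono]) (simp add: abs_mult mult_left_mono w)
    also have "\<dots> \<le> (\<Sum>i\<in>UNIV. \<Sum>j\<in>UNIV. \<bar>q$i$j\<bar>) * (\<bar>a\<bar> + \<bar>b\<bar>)"
      unfolding sum_distrib_right[symmetric]
      by (rule mult_right_mono[OF member_le_sum]) (auto intro: sum_nonneg)
    finally show "((- ((\<Sum>i\<in>UNIV. \<Sum>j\<in>UNIV. \<bar>q$i$j\<bar>) * (\<bar>a\<bar> + \<bar>b\<bar>))) *\<^sub>R 1) $ i \<le> (q *v w) $ i"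
      by simp
  qed
qed

locale Q_control =
  fixes P :: "(real^'d^'d) set" and f :: "real^'d^'d \<Rightarrow> real^'d" and q0 :: "real^'d^'d"
  assumes Qmatrix: "\<And>q. q \<in> P \<Longrightarrow> is_Qmatrix q"
    and q0: "q0 \<in> P" and f_q0: "f q0 = 0" and f_nonpos: "\<And>q. q \<in> P \<Longrightarrow> f q \<le> 0"
    and generator_bdd_above: "\<And>u. bdd_above ((\<lambda>q. q *v u + f q) ` P)"
begin

lemma Sq_le_Eh:
  assumes q: "q \<in> P" and h: "0 \<le> h"
  shows "Sq f q h w \<le> Eh P f h w"
proof -
  have "w \<le> norm w *\<^sub>R 1" using vec_in_box_norm[of w] by simp
  hence "bdd_above ((\<lambda>q. Sq f q h w) ` P)"
    using h by (auto intro!: bdd_aboveI2 Sq_le_const[OF Qmatrix _ f_nonpos])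
  thus ?thesis unfolding Eh_def using q by (rule cSUP_upper[rotated])
qed

lemma Eh_least: "(\<And>q. q \<in> P \<Longrightarrow> Sq f q h w \<le> z) \<Longrightarrow> Eh P f h w \<le> z"
  unfolding Eh_def using q0 by (intro cSUP_least) auto

lemma Eh_zero [simp]: "Eh P f 0 w = w"
  unfolding Eh_def using q0 by (auto intro: cSUP_const)

lemma Eh_le_const: "0 \<le> h \<Longrightarrow> w \<le> b *\<^sub>R 1 \<Longrightarrow> Eh P f h w \<le> b *\<^sub>R 1"
  by (intro Eh_least Sq_le_const[OF Qmatrix _ f_nonpos])

lemma Eh_ge_const:
  assumes h: "0 \<le> h" and w: "a *\<^sub>R 1 \<le> w"
  shows "a *\<^sub>R 1 \<le> Eh P f h w"
proof -
  have "a *\<^sub>R 1 = Sq f q0 h (a *\<^sub>R 1)"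
    by (simp add: Sq_def f_q0 matrix_vector_mult_scaleR mexp_one[OF Qmatrix[OF q0]])
  also have "\<dots> \<le> Sq f q0 h w" by (rule Sq_mono[OF Qmatrix[OF q0] h w])
  also have "\<dots> \<le> Eh P f h w" by (rule Sq_le_Eh[OF q0 h])
  finally show ?thesis .
qed

lemma Eh_in_box: "0 \<le> h \<Longrightarrow> w \<in> {a *\<^sub>R 1..b *\<^sub>R 1} \<Longrightarrow> Eh P f h w \<in> {a *\<^sub>R 1..b *\<^sub>R 1}"
  using Eh_le_const Eh_ge_const by simp

lemma Eh_nonexpansive:
  assumes h: "0 \<le> h" and vw: "v \<le> w + c *\<^sub>R 1"
  shows "Eh P f h v \<le> Eh P f h w + c *\<^sub>R 1"
proof (rule Eh_least)
  fix q assume q: "q \<in> P"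
  have "Sq f q h v \<le> Sq f q h (w + c *\<^sub>R 1)" by (rule Sq_mono[OF Qmatrix[OF q] h vw])
  also have "\<dots> = Sq f q h w + c *\<^sub>R 1" by (rule Sq_add_const[OF Qmatrix[OF q]])
  also have "\<dots> \<le> Eh P f h w + c *\<^sub>R 1" using Sq_le_Eh[OF q h] by simp
  finally show "Sq f q h v \<le> Eh P f h w + c *\<^sub>R 1" .
qed

lemma Eh_mono: "0 \<le> h \<Longrightarrow> v \<le> w \<Longrightarrow> Eh P f h v \<le> Eh P f h w"
  using Eh_nonexpansive[of h v w 0] by simp

lemma Eh_add_le:
  assumes h1: "0 \<le> h1" and h2: "0 \<le> h2"
  shows "Eh P f (h1 + h2) w \<le> Eh P f h1 (Eh P f h2 w)"
proof (rule Eh_least)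
  fix q assume q: "q \<in> P"
  have "Sq f q (h1 + h2) w = Sq f q h1 (Sq f q h2 w)" by (rule Sq_add[OF h1 h2])
  also have "\<dots> \<le> Sq f q h1 (Eh P f h2 w)" by (rule Sq_mono[OF Qmatrix[OF q] h1 Sq_le_Eh[OF q h2]])
  also have "\<dots> \<le> Eh P f h1 (Eh P f h2 w)" by (rule Sq_le_Eh[OF q h1])
  finally show "Sq f q (h1 + h2) w \<le> Eh P f h1 (Eh P f h2 w)" .
qed

text \<open>Off-diagonal entries are nonnegative and diagonal ones nonpositive, so on a box the
  \<open>i\<close>-th row of \<open>q w\<close> is largest at the corner with \<open>w\<^sub>i = a\<close> and all other entries \<open>b\<close>; the
  finitely many corners turn pointwise boundedness of the generators into a uniform bound.\<close>

lemma generator_bounded_on_box: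
  "\<exists>C. \<forall>q\<in>P. \<forall>w\<in>{a *\<^sub>R 1..b *\<^sub>R 1}. q *v w + f q \<le> C *\<^sub>R 1"
proof -
  define corner where "corner i = (\<chi> j. if j = i then a else b)" for i :: 'd
  have "\<forall>i. \<exists>M. \<forall>q\<in>P. q *v corner i + f q \<le> M"
    using generator_bdd_above by (auto simp: bdd_above_def)
  then obtain M where M: "\<And>i q. q \<in> P \<Longrightarrow> q *v corner i + f q \<le> M i"
    by metis
  have "q *v w + f q \<le> (\<Sum>i\<in>UNIV. \<bar>M i $ i\<bar>) *\<^sub>R 1"
    if q: "q \<in> P" and w: "w \<in> {a *\<^sub>R 1..b *\<^sub>R 1}" for q w
    unfolding less_eq_vec_def
  proof
    fix i
    have "(q *v w) $ i \<le> (q *v corner i) $ i"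
      unfolding matrix_vector_mult_def
    proof (simp, rule sum_mono)
      fix j
      have "q$i$i \<le> 0" "j \<noteq> i \<Longrightarrow> 0 \<le> q$i$j"
        using Qmatrix[OF q] by (auto simp: is_Qmatrix_def)
      moreover have "a \<le> w $ i" "w $ j \<le> b"
        using w by (auto simp: less_eq_vec_def)
      ultimately show "q $ i $ j * w $ j \<le> q $ i $ j * corner i $ j"
        by (cases "j = i") (simp_all add: corner_def mult_left_mono_neg mult_left_mono)
    qed
    moreover have "(q *v corner i + f q) $ i \<le> M i $ i"
      using M[OF q, of i] by (simp add: less_eq_vec_def)
    moreover have "M i $ i \<le> (\<Sum>i\<in>UNIV. \<bar>M i $ i\<bar>)"
      using member_le_sum[of i UNIV "\<lambda>i. \<bar>M i $ i\<bar>"] by simp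
    ultimately show "(q *v w + f q) $ i \<le> ((\<Sum>i\<in>UNIV. \<bar>M i $ i\<bar>) *\<^sub>R 1) $ i" by simp
  qed
  thus ?thesis by blast
qed

end

locale Q_control_on_box = Q_control +
  fixes a b K :: real
  assumes defect_nonneg: "0 \<le> K"
    and Eh_Eh_le: "w \<in> {a *\<^sub>R 1..b *\<^sub>R 1} \<Longrightarrow> 0 \<le> h1 \<Longrightarrow> 0 \<le> h2 \<Longrightarrow>
      Eh P f h1 (Eh P f h2 w) \<le> Eh P f (h1 + h2) w + ((h1 + h2) * K) *\<^sub>R 1"

text \<open>\<open>\<E>_{h\<^sub>2}\<close> moves \<open>w\<close> up by at most \<open>h\<^sub>2 C\<close> and \<open>\<E>_{h\<^sub>1}\<close> by at most \<open>h\<^sub>1 C\<close>, while \<open>S_{q\<^sub>0}\<close>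
  alone already moves \<open>w\<close> down by at most \<open>(h\<^sub>1 + h\<^sub>2) C\<^sub>0\<close>.\<close>

lemma (in Q_control) ex_Q_control_on_box:
  "\<exists>K. Q_control_on_box P f q0 a b K"
proof -
  obtain C where C: "\<And>q w. q \<in> P \<Longrightarrow> w \<in> {a *\<^sub>R 1..b *\<^sub>R 1} \<Longrightarrow> q *v w + f q \<le> C *\<^sub>R 1"
    using generator_bounded_on_box[of a b] by blast
  obtain C0 where "\<forall>w\<in>{a *\<^sub>R 1..b *\<^sub>R 1}. (- C0) *\<^sub>R 1 \<le> q0 *v w"
    using matrix_vector_mult_box_lower_bound by blast
  hence C0: "\<And>w. w \<in> {a *\<^sub>R 1..b *\<^sub>R 1} \<Longrightarrow> (- C0) *\<^sub>R 1 \<le> q0 *v w + f q0"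
    by (simp add: f_q0)
  have up: "Eh P f h w \<le> w + (h * C) *\<^sub>R 1" if "w \<in> {a *\<^sub>R 1..b *\<^sub>R 1}" "0 \<le> h" for w h
  proof (rule Eh_least)
    fix q assume q: "q \<in> P"
    show "Sq f q h w \<le> w + (h * C) *\<^sub>R 1"
      by (rule Sq_le_add_const[where f = f, OF Qmatrix[OF q] that(2) C[OF q that(1)]])
  qed
  have down: "w + (h * - C0) *\<^sub>R 1 \<le> Eh P f h w" if "w \<in> {a *\<^sub>R 1..b *\<^sub>R 1}" "0 \<le> h" for w h
    using Sq_ge_add_const[where f = f, OF Qmatrix[OF q0] that(2) C0[OF that(1)]]
      Sq_le_Eh[OF q0 that(2)]
    by (rule order_trans)
  show ?thesis
  proof (intro exI[of _ "max 0 (C + C0)"] Q_control_on_box.intro Q_control_on_box_axioms.intro)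
    fix w :: "real^'d" and h1 h2 :: real
    assume w: "w \<in> {a *\<^sub>R 1..b *\<^sub>R 1}" and h1: "0 \<le> h1" and h2: "0 \<le> h2"
    have "Eh P f h1 (Eh P f h2 w) \<le> w + (h2 * C) *\<^sub>R 1 + (h1 * C) *\<^sub>R 1"
      using up[OF Eh_in_box[OF h2 w] h1] up[OF w h2] by (simp add: order_trans)
    also have "\<dots> = (w + ((h1 + h2) * - C0) *\<^sub>R 1) + ((h1 + h2) * (C + C0)) *\<^sub>R 1"
      by (simp add: algebra_simps)
    also have "\<dots> \<le> Eh P f (h1 + h2) w + ((h1 + h2) * max 0 (C + C0)) *\<^sub>R 1"
      using down[OF w, of "h1 + h2"] h1 h2 mult_left_mono[of "C + C0" "max 0 (C + C0)" "h1 + h2"]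
      by (intro add_mono) (auto simp: less_eq_vec_def)
    finally show "Eh P f h1 (Eh P f h2 w) \<le> Eh P f (h1 + h2) w + ((h1 + h2) * max 0 (C + C0)) *\<^sub>R 1" .
  qed (simp_all add: Q_control_axioms)
qed

lemma scaleR_one_vec_le_iff: "c *\<^sub>R (1::real^'n::finite) \<le> d *\<^sub>R 1 \<longleftrightarrow> c \<le> d"
  by (simp add: less_eq_vec_def)

lemma sorted_hd_le: "sorted xs \<Longrightarrow> y \<in> set xs \<Longrightarrow> hd xs \<le> y"
  by (cases xs) auto

lemma sorted_le_last: "sorted xs \<Longrightarrow> y \<in> set xs \<Longrightarrow> y \<le> last xs"
  by (induction xs) (auto split: if_splits)

fun gaps_le :: "real \<Rightarrow> real list \<Rightarrow> bool" where
  "gaps_le \<delta> (a # b # r) \<longleftrightarrow> b - a \<le> \<delta> \<and> gaps_le \<delta> (b # r)"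
| "gaps_le \<delta> _ \<longleftrightarrow> True"

lemma gaps_le_insort:
  assumes "sorted xs" "gaps_le \<delta> xs" "0 \<le> \<delta>" "xs \<noteq> []" "hd xs \<le> x" "x \<le> last xs"
  shows "gaps_le \<delta> (insort x xs)"
  using assms
proof (induction xs rule: induct_list012)
  case (3 a b r)
  show ?case
  proof (cases "x \<le> b")
    case True
    thus ?thesis using 3 by auto
  next
    case False
    have "gaps_le \<delta> (insort x (b # r))"
      by (rule "3.IH"(2)) (use 3 False in \<open>auto split: if_splits\<close>)
    thus ?thesis using False 3 by auto
  qed
qed auto

lemma gaps_le_union:
  assumes A: "finite A" "lo \<in> A" "hi \<in> A" and gaps: "gaps_le \<delta> (sorted_list_of_set A)"
    and \<delta>: "0 \<le> \<delta>" and D: "finite D" "D \<subseteq> {lo..hi}"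
  shows "gaps_le \<delta> (sorted_list_of_set (A \<union> D))"
  using D
proof (induction D rule: finite_induct)
  case (insert x D)
  let ?xs = "sorted_list_of_set (A \<union> D)"
  have xs: "sorted ?xs" "lo \<in> set ?xs" "hi \<in> set ?xs" "?xs \<noteq> []"
    using A insert by auto
  have "hd ?xs \<le> lo" "hi \<le> last ?xs"
    using xs by (auto simp: sorted_hd_le sorted_le_last)
  hence "gaps_le \<delta> (insort x ?xs)"
    using insert xs \<delta> by (intro gaps_le_insort) auto
  thus ?case
    using insert A by (cases "x \<in> A \<union> D") (auto simp: sorted_list_of_set_insert insert_absorb)
qed (simp add: gaps)

lemma gaps_le_mesh: "gaps_le (mesh \<pi>) (sorted_list_of_set \<pi>)"
proof -
  have "gaps_le \<delta> xs" if "\<And>g. g \<in> set (map2 (\<lambda>a b. b - a) xs (tl xs)) \<Longrightarrow> g \<le> \<delta>" for \<delta> xs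
    using that by (induction xs rule: induct_list012) auto
  thus ?thesis
    unfolding mesh_def Let_def by (meson List.finite_set Max_ge finite_insert insertI2)
qed

lemma mesh_nonneg: "0 \<le> mesh \<pi>"
  unfolding mesh_def Let_def by (rule Max_ge) auto

context Q_control
begin

lemma comp_list_in_box:
  "sorted xs \<Longrightarrow> u \<in> {a *\<^sub>R 1..b *\<^sub>R 1} \<Longrightarrow> comp_list P f xs u \<in> {a *\<^sub>R 1..b *\<^sub>R 1}"
  by (induction xs rule: induct_list012) (auto intro!: Eh_le_const Eh_ge_const)

lemma Epi_eq_comp_list: "Epi P f \<pi> u = comp_list P f (sorted_list_of_set \<pi>) u"
  by (simp add: Epi_def)

end

context Q_control_on_box
begin

text \<open>Splitting a step of length \<open>z - y\<close> at \<open>x\<close> can only increase the value, by \<open>Eh_add_le\<close>,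
  and by at most \<open>(z - y) K\<close>, by \<open>Eh_Eh_le\<close>; monotonicity and nonexpansiveness carry this
  through the remaining steps.\<close>

lemma comp_list_insort:
  "sorted_wrt (<) xs \<Longrightarrow> gaps_le \<delta> xs \<Longrightarrow> u \<in> {a *\<^sub>R 1..b *\<^sub>R 1} \<Longrightarrow> x \<notin> set xs \<Longrightarrow>
    xs \<noteq> [] \<Longrightarrow> hd xs < x \<Longrightarrow> x < last xs \<Longrightarrow>
    comp_list P f xs u \<le> comp_list P f (insort x xs) u \<and>
    comp_list P f (insort x xs) u \<le> comp_list P f xs u + (\<delta> * K) *\<^sub>R 1"
proof (induction xs rule: induct_list012)
  case (3 y z r)
  let ?w = "comp_list P f (z # r) u"
  have yz: "y < z" "z - y \<le> \<delta>" using "3.prems" by auto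
  show ?case
  proof (cases "x < z")
    case True
    have split: "comp_list P f (insort x (y # z # r)) u = Eh P f (x - y) (Eh P f (z - x) ?w)"
      using True "3.prems" by simp
    have w: "?w \<in> {a *\<^sub>R 1..b *\<^sub>R 1}"
      using "3.prems" by (intro comp_list_in_box) (auto dest: strict_sorted_imp_sorted)
    have "Eh P f ((x - y) + (z - x)) ?w \<le> Eh P f (x - y) (Eh P f (z - x) ?w)"
      using True "3.prems" by (intro Eh_add_le) auto
    moreover have "Eh P f (x - y) (Eh P f (z - x) ?w) \<le> Eh P f ((x - y) + (z - x)) ?w + (\<delta> * K) *\<^sub>R 1"
      using Eh_Eh_le[OF w, of "x - y" "z - x"] True "3.prems" yz
        mult_right_mono[OF yz(2) defect_nonneg]
      by (fastforce simp: less_eq_vec_def intro: order_trans)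
    ultimately show ?thesis unfolding split by simp
  next
    case False
    hence xz: "z < x" using "3.prems"(4) by (cases "x = z") auto
    obtain r' where r': "insort x (z # r) = z # r'" using xz by simp
    have "comp_list P f (z # r) u \<le> comp_list P f (z # r') u \<and>
        comp_list P f (z # r') u \<le> comp_list P f (z # r) u + (\<delta> * K) *\<^sub>R 1"
      using "3.IH"(2) "3.prems" xz r' by auto
    moreover have "insort x (y # z # r) = y # z # r'" using xz yz r' by simp
    ultimately show ?thesis
      using yz Eh_mono Eh_nonexpansive by simp
  qed
qed auto

lemma comp_list_refine:
  assumes A: "finite A" "lo \<in> A" "hi \<in> A" and gaps: "gaps_le \<delta> (sorted_list_of_set A)"
    and \<delta>: "0 \<le> \<delta>" and u: "u \<in> {a *\<^sub>R 1..b *\<^sub>R 1}" and D: "finite D" "D \<subseteq> {lo<..<hi}"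
  shows "comp_list P f (sorted_list_of_set A) u \<le> comp_list P f (sorted_list_of_set (A \<union> D)) u \<and>
    comp_list P f (sorted_list_of_set (A \<union> D)) u
      \<le> comp_list P f (sorted_list_of_set A) u + (real (card D) * \<delta> * K) *\<^sub>R 1"
  using D
proof (induction D rule: finite_induct)
  case (insert x D)
  let ?L = "comp_list P f (sorted_list_of_set A) u"
  let ?xs = "sorted_list_of_set (A \<union> D)"
  have IH: "?L \<le> comp_list P f ?xs u" "comp_list P f ?xs u \<le> ?L + (real (card D) * \<delta> * K) *\<^sub>R 1"
    using insert by auto
  show ?case
  proof (cases "x \<in> A \<union> D")
    case True
    hence "A \<union> insert x D = A \<union> D" by auto
    moreover have "real (card D) * \<delta> * K \<le> real (card (insert x D)) * \<delta> * K"
      using insert \<delta> defect_nonneg by (intro mult_right_mono) auto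
    ultimately show ?thesis
      using IH by (simp add: order_trans[OF IH(2)] scaleR_one_vec_le_iff)
  next
    case False
    have xs: "sorted ?xs" "lo \<in> set ?xs" "hi \<in> set ?xs" "?xs \<noteq> []"
      using A insert by auto
    have "hd ?xs \<le> lo" "hi \<le> last ?xs"
      using xs by (auto simp: sorted_hd_le sorted_le_last)
    hence "comp_list P f ?xs u \<le> comp_list P f (insort x ?xs) u \<and>
        comp_list P f (insort x ?xs) u \<le> comp_list P f ?xs u + (\<delta> * K) *\<^sub>R 1"
      using False A insert \<delta> u xs
      by (intro comp_list_insort gaps_le_union[OF A gaps]) auto
    moreover have "sorted_list_of_set (A \<union> insert x D) = insort x ?xs"
      using False A insert by (simp add: sorted_list_of_set_insert)
    moreover have "real (card (insert x D)) * \<delta> * K = real (card D) * \<delta> * K + \<delta> * K"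
      using insert by (simp add: algebra_simps)
    ultimately show ?thesis
      using IH by (auto simp: scaleR_add_left intro: order_trans add_right_mono)
  qed
qed simp

end

lemma partitions_atD:
  assumes "\<pi> \<in> partitions_at t"
  shows "finite \<pi>" "0 \<in> \<pi>" "t \<in> \<pi>" "\<pi> \<subseteq> {0..t}"
  using assms Max_in[of \<pi>] Max_ge[of \<pi>]
  by (fastforce simp: partitions_at_def partitions_def)+

lemma partitions_at_Un:
  assumes "p \<in> partitions_at t" "p' \<in> partitions_at t"
  shows "p \<union> p' \<in> partitions_at t"
proof -
  have "Max (p \<union> p') = t"
    using partitions_atD[OF assms(1)] partitions_atD[OF assms(2)] by (intro Max_eqI) auto
  thus ?thesis
    using assms by (auto simp: partitions_at_def partitions_def)
qed

lemma partitions_at_Diff: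
  assumes "p \<in> partitions_at t" "p' \<in> partitions_at t"
  shows "p' - p \<subseteq> {0<..<t}"
  using partitions_atD[OF assms(1)] partitions_atD[OF assms(2)] by (force simp: less_le)

lemma (in Q_control) Epi_le_norm: "Epi P f \<pi> u \<le> norm u *\<^sub>R 1"
  using comp_list_in_box[OF _ vec_in_box_norm, of "sorted_list_of_set \<pi>" u]
  by (simp add: Epi_eq_comp_list)

context Q_control_on_box
begin

lemma Epi_mono_refinement:
  assumes p: "p \<in> partitions_at t" and p': "p' \<in> partitions_at t" and "p \<subseteq> p'"
    and u: "u \<in> {a *\<^sub>R 1..b *\<^sub>R 1}"
  shows "Epi P f p u \<le> Epi P f p' u"
proof -
  have "p \<union> (p' - p) = p'" using \<open>p \<subseteq> p'\<close> by auto
  thus ?thesis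
    using comp_list_refine[OF partitions_atD(1-3)[OF p] gaps_le_mesh mesh_nonneg u,
        of "p' - p"] partitions_at_Diff[OF p p'] partitions_atD(1)[OF p']
    by (simp add: Epi_eq_comp_list)
qed

lemma Epi_le_Epi_plus_mesh:
  assumes p: "p \<in> partitions_at t" and \<pi>: "\<pi> \<in> partitions_at t" and u: "u \<in> {a *\<^sub>R 1..b *\<^sub>R 1}"
  shows "Epi P f p u \<le> Epi P f \<pi> u + (real (card p) * mesh \<pi> * K) *\<^sub>R 1"
proof -
  have "Epi P f p u \<le> Epi P f (\<pi> \<union> (p - \<pi>)) u"
    using Epi_mono_refinement[OF p partitions_at_Un[OF \<pi> p] _ u] by (simp add: Un_commute)
  also have "\<dots> \<le> Epi P f \<pi> u + (real (card (p - \<pi>)) * mesh \<pi> * K) *\<^sub>R 1"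
    using comp_list_refine[OF partitions_atD(1-3)[OF \<pi>] gaps_le_mesh mesh_nonneg u, of "p - \<pi>"]
      partitions_atD(1)[OF p] partitions_at_Diff[OF \<pi> p]
    by (simp add: Epi_eq_comp_list)
  also have "\<dots> \<le> Epi P f \<pi> u + (real (card p) * mesh \<pi> * K) *\<^sub>R 1"
    using card_mono[OF partitions_atD(1)[OF p], of "p - \<pi>"] mesh_nonneg defect_nonneg
    by (simp add: scaleR_one_vec_le_iff mult_right_mono)
  finally show ?thesis .
qed

end

lemma tendsto_Sup_vec_of_approx:
  fixes X :: "nat \<Rightarrow> real^'n::finite" and g :: "'a \<Rightarrow> real^'n"
  assumes inc: "incseq X" and X: "\<And>n. X n \<in> g ` A" and bdd: "bdd_above (g ` A)"
    and e: "e \<longlonglongrightarrow> 0" and approx: "\<And>x. x \<in> A \<Longrightarrow> \<exists>c. \<forall>n. g x \<le> X n + (c * e n) *\<^sub>R 1"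
  shows "X \<longlonglongrightarrow> Sup (g ` A)"
proof (rule vec_tendstoI)
  fix i
  let ?Y = "\<lambda>n. X n $ i" and ?G = "(\<lambda>x. g x $ i) ` A"
  have bdd_i: "bdd_above ?G"
    using bdd by (auto simp: bdd_above_def less_eq_vec_def)
  have Y_le: "?Y n \<le> Sup ?G" for n
    using X[of n] by (auto intro: cSup_upper[OF _ bdd_i])
  have bdd_Y: "bdd_above (range ?Y)"
    using Y_le by (auto intro: bdd_aboveI[of _ "Sup ?G"])
  have "Sup ?G \<le> (SUP n. ?Y n)"
  proof (rule cSup_least)
    show "?G \<noteq> {}" using X by blast
    fix y assume "y \<in> ?G"
    then obtain x c where x: "y = g x $ i" and c: "\<And>n. g x \<le> X n + (c * e n) *\<^sub>R 1"
      using approx by blast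
    have "(\<lambda>n. ?Y n + c * e n) \<longlonglongrightarrow> (SUP n. ?Y n) + c * 0"
      using LIMSEQ_incseq_SUP[OF bdd_Y] inc e
      by (intro tendsto_intros) (auto simp: incseq_def less_eq_vec_def)
    moreover have "y \<le> ?Y n + c * e n" for n
      using c[of n] by (simp add: x less_eq_vec_def)
    ultimately show "y \<le> (SUP n. ?Y n)"
      by (intro LIMSEQ_le_const) auto
  qed
  moreover have "(SUP n. ?Y n) \<le> Sup ?G"
    using Y_le by (intro cSUP_least) auto
  moreover have "?Y \<longlonglongrightarrow> (SUP n. ?Y n)"
    using inc by (intro LIMSEQ_incseq_SUP[OF bdd_Y]) (auto simp: incseq_def less_eq_vec_def)
  ultimately show "?Y \<longlonglongrightarrow> Sup (g ` A) $ i"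
    by (simp add: Sup_vec_def image_image)
qed

theorem mainTheorem5:
  fixes P :: "(real^'d^'d) set" and f :: "real^'d^'d \<Rightarrow> real^'d"
    and q0 :: "real^'d^'d" and t :: real and \<pi> :: "nat \<Rightarrow> real set" and u0 :: "real^'d"
  assumes Q: "\<And>q. q \<in> P \<Longrightarrow> is_Qmatrix q"
    and q0: "q0 \<in> P" and fq0: "f q0 = 0" and fle: "\<And>q. q \<in> P \<Longrightarrow> f q \<le> 0"
    and fin: "\<And>u :: real^'d. bdd_above ((\<lambda>q. q *v u + f q) ` P)"
    and t: "t \<ge> 0"
    and pi: "\<And>n. \<pi> n \<in> partitions_at t"
    and nested: "\<And>n. \<pi> n \<subseteq> \<pi> (Suc n)"
    and mesh_dec: "antimono (\<lambda>n. mesh (\<pi> n))"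
    and mesh_lim: "(\<lambda>n. mesh (\<pi> n)) \<longlonglongrightarrow> 0"
  shows "incseq (\<lambda>n. Epi P f (\<pi> n) u0) \<and> (\<lambda>n. Epi P f (\<pi> n) u0) \<longlonglongrightarrow> Nisio P f t u0"
proof -
  interpret Q_control P f q0
    using Q q0 fq0 fle fin by unfold_locales
  obtain K where "Q_control_on_box P f q0 (- norm u0) (norm u0) K"
    using ex_Q_control_on_box by blast
  then interpret Q_control_on_box P f q0 "- norm u0" "norm u0" K .
  have u0: "u0 \<in> {(- norm u0) *\<^sub>R 1..norm u0 *\<^sub>R 1}" by (rule vec_in_box_norm)
  have inc: "incseq (\<lambda>n. Epi P f (\<pi> n) u0)"
    using Epi_mono_refinement[OF pi pi nested u0] by (rule incseq_SucI)
  have "(\<lambda>n. Epi P f (\<pi> n) u0) \<longlonglongrightarrow> Nisio P f t u0"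
    unfolding Nisio_def
  proof (rule tendsto_Sup_vec_of_approx[OF inc _ _ mesh_lim])
    show "Epi P f (\<pi> n) u0 \<in> (\<lambda>p. Epi P f p u0) ` partitions_at t" for n
      using pi by blast
    show "bdd_above ((\<lambda>p. Epi P f p u0) ` partitions_at t)"
      using Epi_le_norm by (intro bdd_aboveI2)
    show "\<exists>c. \<forall>n. Epi P f p u0 \<le> Epi P f (\<pi> n) u0 + (c * mesh (\<pi> n)) *\<^sub>R 1"
      if "p \<in> partitions_at t" for p
      using Epi_le_Epi_plus_mesh[OF that pi u0] by (metis mult.commute mult.left_commute)
  qed
  with inc show ?thesis by blast
qed

end
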